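(* Let $Q$ be a Foulis quantale. Then the complete orthomodular lattice $[Q]=\{[t]\mid t\in Q\}$ is a left $Q$-module with action $u\bullet k=(u\cdot k)^{\perp\perp}$ for $u\in Q$, $k\in[Q]$, and it is also a right $\mathbf 2$-module.
   Context: A quantale is a complete lattice $Q$ (join $\bigsqcup$) with associative multiplication distributing over arbitrary joins on both sides; unital if it has a two-sided unit $e$; involutive if it has a join-preserving semigroup involution $*$. A Foulis quantale is a unital involutive quantale $Q$ with an endomap $[-]\colon Q\to Q$ such that: (a) $[s]\cdot[s]=[s]=[s]^*$; (b) $[e]=0$; (c) $s\cdot x=0$ iff $x=[s]\cdot y$ for some $y\in Q$. For $t\in Q$ put $t^\perp=[t^*]$. The set $[Q]$ is a complete orthomodular lattice with order $k_1\le k_2$ iff $k_1=k_2\cdot k_1$, top $[0]$, orthocomplement $k^\perp=[k]$, and joins $\bigvee S=[[\bigsqcup S]]$. A left $Q$-module is a complete lattice $A$ with $\bullet\colon Q\times A\to A$ such that $s\bullet\bigvee B=\bigvee_{x\in B}s\bullet x$, $(\bigsqcup T)\bullet a=\bigvee_{t\in T}t\bullet a$, $u\bullet(v\bullet a)=(u\cdot v)\bullet a$, $e\bullet a=a$. $\mathbf 2$ is the two-element chain with meet as multiplication and identity involution; a complete lattice $A$ is a right $\mathbf 2$-module via $a\bullet1=a$, $a\bullet0=0$. *)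

theory Defs
  imports Main
begin

definition quantale :: "('a::complete_lattice \<Rightarrow> 'a \<Rightarrow> 'a) \<Rightarrow> bool" where
  "quantale mult \<longleftrightarrow>
     (\<forall>a b c. mult (mult a b) c = mult a (mult b c)) \<and>
     (\<forall>a X. mult a (Sup X) = Sup ((\<lambda>x. mult a x) ` X)) \<and>
     (\<forall>a X. mult (Sup X) a = Sup ((\<lambda>x. mult x a) ` X))"

definition unital_quantale :: "('a::complete_lattice \<Rightarrow> 'a \<Rightarrow> 'a) \<Rightarrow> 'a \<Rightarrow> bool" where
  "unital_quantale mult e \<longleftrightarrow> quantale mult \<and> (\<forall>a. mult e a = a \<and> mult a e = a)"

definition involutive_unital_quantale ::
  "('a::complete_lattice \<Rightarrow> 'a \<Rightarrow> 'a) \<Rightarrow> 'a \<Rightarrow> ('a \<Rightarrow> 'a) \<Rightarrow> bool" where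
  "involutive_unital_quantale mult e star \<longleftrightarrow> unital_quantale mult e \<and>
     (\<forall>a. star (star a) = a) \<and>
     (\<forall>a b. star (mult a b) = mult (star b) (star a)) \<and>
     (\<forall>X. star (Sup X) = Sup (star ` X))"

definition foulis_quantale ::
  "('a::complete_lattice \<Rightarrow> 'a \<Rightarrow> 'a) \<Rightarrow> 'a \<Rightarrow> ('a \<Rightarrow> 'a) \<Rightarrow> ('a \<Rightarrow> 'a) \<Rightarrow> bool" where
  "foulis_quantale mult e star br \<longleftrightarrow> involutive_unital_quantale mult e star \<and>
     (\<forall>s. mult (br s) (br s) = br s \<and> star (br s) = br s) \<and>
     br e = bot \<and>
     (\<forall>s x. mult s x = bot \<longleftrightarrow> (\<exists>y. x = mult (br s) y))"

definition bracket_set :: "('a \<Rightarrow> 'a) \<Rightarrow> 'a set" where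
  "bracket_set br = range br"

definition bracket_le :: "('a \<Rightarrow> 'a \<Rightarrow> 'a) \<Rightarrow> 'a \<Rightarrow> 'a \<Rightarrow> bool" where
  "bracket_le mult k1 k2 \<longleftrightarrow> k1 = mult k2 k1"

definition bracket_join :: "('a::complete_lattice \<Rightarrow> 'a) \<Rightarrow> 'a set \<Rightarrow> 'a" where
  "bracket_join br S = br (br (Sup S))"

definition perp :: "('a \<Rightarrow> 'a) \<Rightarrow> ('a \<Rightarrow> 'a) \<Rightarrow> 'a \<Rightarrow> 'a" where
  "perp star br t = br (star t)"

definition complete_lattice_on :: "'b set \<Rightarrow> ('b \<Rightarrow> 'b \<Rightarrow> bool) \<Rightarrow> ('b set \<Rightarrow> 'b) \<Rightarrow> bool" where
  "complete_lattice_on A le J \<longleftrightarrow>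
     (\<forall>x\<in>A. le x x) \<and>
     (\<forall>x\<in>A. \<forall>y\<in>A. le x y \<and> le y x \<longrightarrow> x = y) \<and>
     (\<forall>x\<in>A. \<forall>y\<in>A. \<forall>z\<in>A. le x y \<and> le y z \<longrightarrow> le x z) \<and>
     (\<forall>S. S \<subseteq> A \<longrightarrow> J S \<in> A \<and> (\<forall>x\<in>S. le x (J S)) \<and>
                  (\<forall>y\<in>A. (\<forall>x\<in>S. le x y) \<longrightarrow> le (J S) y))"

definition left_module ::
  "('q::complete_lattice \<Rightarrow> 'q \<Rightarrow> 'q) \<Rightarrow> 'q \<Rightarrow>
   'b set \<Rightarrow> ('b \<Rightarrow> 'b \<Rightarrow> bool) \<Rightarrow> ('b set \<Rightarrow> 'b) \<Rightarrow> ('q \<Rightarrow> 'b \<Rightarrow> 'b) \<Rightarrow> bool" where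
  "left_module qmult qe A le J act \<longleftrightarrow>
     complete_lattice_on A le J \<and>
     (\<forall>s. \<forall>a\<in>A. act s a \<in> A) \<and>
     (\<forall>s B. B \<subseteq> A \<longrightarrow> act s (J B) = J ((\<lambda>x. act s x) ` B)) \<and>
     (\<forall>T. \<forall>a\<in>A. act (Sup T) a = J ((\<lambda>t. act t a) ` T)) \<and>
     (\<forall>u v. \<forall>a\<in>A. act u (act v a) = act (qmult u v) a) \<and>
     (\<forall>a\<in>A. act qe a = a)"

definition right_module ::
  "('q::complete_lattice \<Rightarrow> 'q \<Rightarrow> 'q) \<Rightarrow> 'q \<Rightarrow>
   'b set \<Rightarrow> ('b \<Rightarrow> 'b \<Rightarrow> bool) \<Rightarrow> ('b set \<Rightarrow> 'b) \<Rightarrow> ('b \<Rightarrow> 'q \<Rightarrow> 'b) \<Rightarrow> bool" where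
  "right_module qmult qe A le J act \<longleftrightarrow>
     complete_lattice_on A le J \<and>
     (\<forall>s. \<forall>a\<in>A. act a s \<in> A) \<and>
     (\<forall>s B. B \<subseteq> A \<longrightarrow> act (J B) s = J ((\<lambda>x. act x s) ` B)) \<and>
     (\<forall>T. \<forall>a\<in>A. act a (Sup T) = J ((\<lambda>t. act a t) ` T)) \<and>
     (\<forall>u v. \<forall>a\<in>A. act (act a u) v = act a (qmult u v)) \<and>
     (\<forall>a\<in>A. act a qe = a)"

text \<open>The two-element quantale 2 = bool (meet as multiplication, unit True),
  and the canonical right 2-action on a complete lattice (A, J): a\<bullet>1 = a, a\<bullet>0 = bottom = J {}.\<close>
definition two_action :: "('b set \<Rightarrow> 'b) \<Rightarrow> 'b \<Rightarrow> bool \<Rightarrow> 'b" where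
  "two_action J a b = (if b then a else J {})"

end

theory Submission
  imports Defs
begin

text \<open>Write \<open>\<kappa> s = [[s\<^sup>*]] = s\<^sup>\<perp>\<^sup>\<perp>\<close>. The Foulis axiom makes \<open>[s]\<close> the largest projection
  annihilated by \<open>s\<close>, and from this one gets the adjunction \<open>\<kappa> s \<le> k \<longleftrightarrow> [k] \<cdot> s = 0\<close> for
  projections \<open>k\<close>, together with \<open>w \<cdot> \<kappa> y = 0 \<longleftrightarrow> w \<cdot> y = 0\<close>. An element of \<open>[Q]\<close> is
  determined by the projections above it, so each module law reduces to an identity between
  annihilation conditions \<open>[k] \<cdot> (\<dots>) = 0\<close>, which follows from associativity and join
  preservation of the multiplication. The right action of \<open>2\<close> exists on every complete lattice.\<close>

lemma
  assumes "complete_lattice_on A le J"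
  shows complete_lattice_on_refl: "x \<in> A \<Longrightarrow> le x x"
    and complete_lattice_on_antisym: "x \<in> A \<Longrightarrow> y \<in> A \<Longrightarrow> le x y \<Longrightarrow> le y x \<Longrightarrow> x = y"
    and complete_lattice_on_join_mem: "S \<subseteq> A \<Longrightarrow> J S \<in> A"
    and complete_lattice_on_join_upper: "S \<subseteq> A \<Longrightarrow> s \<in> S \<Longrightarrow> le s (J S)"
    and complete_lattice_on_join_least:
      "S \<subseteq> A \<Longrightarrow> y \<in> A \<Longrightarrow> (\<And>s. s \<in> S \<Longrightarrow> le s y) \<Longrightarrow> le (J S) y"
  using assms unfolding complete_lattice_on_def by metis+

lemma complete_lattice_on_join_eqI:
  assumes cl: "complete_lattice_on A le J" and S: "S \<subseteq> A" and x: "x \<in> A"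
    and upper: "\<And>s. s \<in> S \<Longrightarrow> le s x" and least: "\<And>y. y \<in> A \<Longrightarrow> \<forall>s\<in>S. le s y \<Longrightarrow> le x y"
  shows "J S = x"
proof (rule complete_lattice_on_antisym[OF cl])
  show "le (J S) x"
    using complete_lattice_on_join_least[OF cl S x] upper .
  show "le x (J S)"
    using least complete_lattice_on_join_mem[OF cl S] complete_lattice_on_join_upper[OF cl S] by blast
qed (use cl S x complete_lattice_on_join_mem in auto)

lemma bool_set_cases:
  obtains "T = {}" | "T = {True}" | "T = {False}" | "T = {True, False}"
proof -
  have "T \<in> Pow {True, False}"
    by auto
  then show ?thesis
    using that by (simp add: Pow_insert) blast
qed

lemma right_module_two_action:
  assumes cl: "complete_lattice_on A le J"
  shows "right_module (\<and>) True A le J (two_action J)"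
proof -
  have bot: "J {} \<in> A"
    using complete_lattice_on_join_mem[OF cl] by blast
  have join_single: "J {a} = a" if "a \<in> A" for a
    using complete_lattice_on_join_eqI[OF cl, of "{a}" a] that complete_lattice_on_refl[OF cl]
    by blast
  have join_insert_bot: "J {a, J {}} = a" if "a \<in> A" for a
    using complete_lattice_on_join_eqI[OF cl, of "{a, J {}}" a] that bot
      complete_lattice_on_refl[OF cl] complete_lattice_on_join_least[OF cl, of "{}"] by blast
  have join_const_bot: "J ((\<lambda>_. J {}) ` B) = J {}" for B :: "'a set"
    by (cases "B = {}") (simp_all add: image_constant_conv join_single[OF bot])
  have join_bool: "two_action J a (Sup T) = J ((\<lambda>t. two_action J a t) ` T)"
    if "a \<in> A" for a T
    by (cases T rule: bool_set_cases)
      (simp_all add: two_action_def that join_single join_insert_bot bot insert_commute)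
  show ?thesis
    unfolding right_module_def
    using cl bot join_const_bot join_bool by (simp add: two_action_def) blast
qed

locale foulis =
  fixes mult :: "'a::complete_lattice \<Rightarrow> 'a \<Rightarrow> 'a" (infixl "\<cdot>" 70)
    and e :: 'a and star :: "'a \<Rightarrow> 'a" and br :: "'a \<Rightarrow> 'a"
  assumes foulis_quantale: "foulis_quantale mult e star br"
begin

lemma mult_assoc: "(a \<cdot> b) \<cdot> c = a \<cdot> (b \<cdot> c)"
  and mult_Sup_right: "a \<cdot> Sup X = Sup ((\<lambda>x. a \<cdot> x) ` X)"
  and mult_Sup_left: "Sup X \<cdot> a = Sup ((\<lambda>x. x \<cdot> a) ` X)"
  and mult_unit_left: "e \<cdot> a = a"
  and star_star: "star (star a) = a"
  and star_mult: "star (a \<cdot> b) = star b \<cdot> star a"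
  and star_Sup: "star (Sup X) = Sup (star ` X)"
  and br_idem: "br s \<cdot> br s = br s"
  and star_br: "star (br s) = br s"
  and mult_eq_bot_iff: "s \<cdot> x = bot \<longleftrightarrow> (\<exists>y. x = br s \<cdot> y)"
  using foulis_quantale
  unfolding foulis_quantale_def involutive_unital_quantale_def unital_quantale_def quantale_def
  by blast+

lemma mult_bot_left: "bot \<cdot> x = bot"
  using mult_Sup_left[of "{}" x] by simp

lemma mult_bot_right: "x \<cdot> bot = bot"
  using mult_Sup_right[of x "{}"] by simp

lemma star_bot: "star bot = bot"
  using star_Sup[of "{}"] by simp

lemma star_eq_bot_iff: "star x = bot \<longleftrightarrow> x = bot"
  by (metis star_bot star_star)

lemma mult_eq_bot_iff_fixed: "s \<cdot> x = bot \<longleftrightarrow> br s \<cdot> x = x"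
  by (metis mult_eq_bot_iff mult_assoc br_idem)

lemma mult_eq_bot_iff_fixed_right: "x \<cdot> s = bot \<longleftrightarrow> x \<cdot> br (star s) = x"
  using mult_eq_bot_iff_fixed[of "star s" "star x"]
  by (metis star_eq_bot_iff star_mult star_star star_br)

lemma mult_br: "s \<cdot> br s = bot"
  using mult_eq_bot_iff_fixed br_idem by blast

lemma br_star_mult: "br (star s) \<cdot> s = bot"
  using mult_eq_bot_iff_fixed_right br_idem by blast

lemma br_br_mult: "br (br s) \<cdot> br s = bot"
  using br_star_mult[of "br s"] by (simp add: star_br)

lemma br_br_star_mult: "br (br (star s)) \<cdot> s = s"
  using br_star_mult mult_eq_bot_iff_fixed by blast

lemma mult_br_br: "t \<cdot> br (br t) = t"
  using br_star_mult[of "br t"] mult_eq_bot_iff_fixed_right[of t "br t"] mult_br star_br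
  by metis

lemma br_eqI:
  assumes "\<And>x. br a \<cdot> x = x \<longleftrightarrow> br b \<cdot> x = x"
  shows "br a = br b"
proof -
  have "br b \<cdot> br a = br a" and "br a \<cdot> br b = br b"
    using assms br_idem by blast+
  then show ?thesis
    by (metis star_br star_mult)
qed

lemma br_br_br: "br (br (br t)) = br t"
proof -
  have "br (br t) \<cdot> x = bot \<longleftrightarrow> t \<cdot> x = bot" for x
  proof
    assume "t \<cdot> x = bot"
    then obtain y where "x = br t \<cdot> y"
      using mult_eq_bot_iff by blast
    then show "br (br t) \<cdot> x = bot"
      by (metis br_br_mult mult_assoc mult_bot_left)
  next
    assume "br (br t) \<cdot> x = bot"
    then show "t \<cdot> x = bot"
      by (metis mult_br_br mult_assoc mult_bot_right)
  qed
  then show ?thesis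
    using mult_eq_bot_iff_fixed br_eqI by metis
qed

abbreviation proj_le :: "'a \<Rightarrow> 'a \<Rightarrow> bool" (infix "\<sqsubseteq>" 50)
  where "k \<sqsubseteq> l \<equiv> bracket_le mult k l"

abbreviation proj_closure :: "'a \<Rightarrow> 'a" ("\<kappa>")
  where "\<kappa> s \<equiv> br (br (star s))"

lemma perp_perp_eq_proj_closure: "perp star br (perp star br s) = \<kappa> s"
  unfolding perp_def by (simp add: star_br)

lemma bracket_setI: "br s \<in> bracket_set br"
  unfolding bracket_set_def by simp

lemma bracket_setE:
  assumes "k \<in> bracket_set br"
  shows "star k = k" and "k \<cdot> k = k" and "br (br k) = k"
  using assms br_br_br unfolding bracket_set_def by (auto simp: star_br br_idem)

lemma proj_closure_bracket_set: "k \<in> bracket_set br \<Longrightarrow> \<kappa> k = k"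
  by (simp add: bracket_setE)

lemma mult_proj_eq_bot_iff: "k \<in> bracket_set br \<Longrightarrow> s \<cdot> k = bot \<longleftrightarrow> k \<sqsubseteq> br s"
  unfolding bracket_le_def by (metis mult_eq_bot_iff_fixed)

lemma mult_proj_closure_eq_bot_iff: "w \<cdot> \<kappa> y = bot \<longleftrightarrow> w \<cdot> y = bot"
proof
  assume "w \<cdot> y = bot"
  then have "w \<cdot> br (star y) = w"
    using mult_eq_bot_iff_fixed_right by blast
  then have "w \<cdot> \<kappa> y = w \<cdot> (br (star y) \<cdot> \<kappa> y)"
    by (simp add: mult_assoc[symmetric])
  then show "w \<cdot> \<kappa> y = bot"
    by (simp add: mult_br mult_bot_right)
next
  assume "w \<cdot> \<kappa> y = bot"
  then show "w \<cdot> y = bot"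
    by (metis br_br_star_mult mult_assoc mult_bot_left)
qed

lemma proj_closure_le_iff:
  assumes "k \<in> bracket_set br"
  shows "\<kappa> s \<sqsubseteq> k \<longleftrightarrow> br k \<cdot> s = bot"
proof -
  have "\<kappa> s \<sqsubseteq> k \<longleftrightarrow> \<kappa> s \<sqsubseteq> br (br k)"
    using assms by (simp add: bracket_setE)
  also have "\<dots> \<longleftrightarrow> br k \<cdot> \<kappa> s = bot"
    using mult_proj_eq_bot_iff[OF bracket_setI] by simp
  also have "\<dots> \<longleftrightarrow> br k \<cdot> s = bot"
    by (rule mult_proj_closure_eq_bot_iff)
  finally show ?thesis .
qed

lemma proj_le_iff: "l \<in> bracket_set br \<Longrightarrow> k \<in> bracket_set br \<Longrightarrow> l \<sqsubseteq> k \<longleftrightarrow> br k \<cdot> l = bot"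
  using proj_closure_le_iff proj_closure_bracket_set by metis

lemma bracket_join_eq: "X \<subseteq> bracket_set br \<Longrightarrow> bracket_join br X = \<kappa> (Sup X)"
proof -
  assume "X \<subseteq> bracket_set br"
  then have "star ` X = X"
    using bracket_setE(1) by (force simp: image_iff)
  then show ?thesis
    unfolding bracket_join_def by (simp add: star_Sup)
qed

lemma bracket_join_mem: "bracket_join br X \<in> bracket_set br"
  unfolding bracket_join_def by (rule bracket_setI)

lemma bracket_join_le_iff:
  assumes "X \<subseteq> bracket_set br" and "k \<in> bracket_set br"
  shows "bracket_join br X \<sqsubseteq> k \<longleftrightarrow> (\<forall>x\<in>X. x \<sqsubseteq> k)"
proof -
  have "bracket_join br X \<sqsubseteq> k \<longleftrightarrow> (\<forall>x\<in>X. br k \<cdot> x = bot)"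
    using assms by (simp add: bracket_join_eq proj_closure_le_iff mult_Sup_right)
  also have "\<dots> \<longleftrightarrow> (\<forall>x\<in>X. x \<sqsubseteq> k)"
    using assms proj_le_iff by blast
  finally show ?thesis .
qed

lemma proj_le_refl: "k \<in> bracket_set br \<Longrightarrow> k \<sqsubseteq> k"
  unfolding bracket_le_def by (simp add: bracket_setE)

lemma proj_le_antisym:
  "k \<in> bracket_set br \<Longrightarrow> l \<in> bracket_set br \<Longrightarrow> k \<sqsubseteq> l \<Longrightarrow> l \<sqsubseteq> k \<Longrightarrow> k = l"
  unfolding bracket_le_def by (metis bracket_setE(1) star_mult)

lemma proj_le_trans: "k \<sqsubseteq> l \<Longrightarrow> l \<sqsubseteq> m \<Longrightarrow> k \<sqsubseteq> m"
  unfolding bracket_le_def by (metis mult_assoc)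

lemma complete_lattice_on_bracket_set:
  "complete_lattice_on (bracket_set br) (\<sqsubseteq>) (bracket_join br)"
  unfolding complete_lattice_on_def
  using bracket_join_mem bracket_join_le_iff proj_le_refl proj_le_antisym proj_le_trans
  by meson

lemma proj_eqI:
  assumes "k \<in> bracket_set br" and "l \<in> bracket_set br"
    and "\<And>m. m \<in> bracket_set br \<Longrightarrow> k \<sqsubseteq> m \<longleftrightarrow> l \<sqsubseteq> m"
  shows "k = l"
  using assms proj_le_refl proj_le_antisym by metis

lemma proj_closure_eqI:
  assumes "\<And>k. k \<in> bracket_set br \<Longrightarrow> br k \<cdot> s = bot \<longleftrightarrow> br k \<cdot> t = bot"
  shows "\<kappa> s = \<kappa> t"
  using assms by (intro proj_eqI bracket_setI) (simp add: proj_closure_le_iff)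

lemma proj_closure_mult_proj_closure: "\<kappa> (s \<cdot> \<kappa> t) = \<kappa> (s \<cdot> t)"
  by (rule proj_closure_eqI) (simp add: mult_assoc[symmetric] mult_proj_closure_eq_bot_iff)

lemma bracket_join_image_proj_closure: "bracket_join br (\<kappa> ` X) = \<kappa> (Sup X)"
proof -
  have "bracket_join br (\<kappa> ` X) = \<kappa> (Sup (\<kappa> ` X))"
    using bracket_setI by (subst bracket_join_eq) auto
  also have "\<dots> = \<kappa> (Sup X)"
    by (rule proj_closure_eqI) (simp add: mult_Sup_right image_image mult_proj_closure_eq_bot_iff)
  finally show ?thesis .
qed

lemma left_module_bracket_set:
  "left_module mult e (bracket_set br) (\<sqsubseteq>) (bracket_join br) (\<lambda>u k. \<kappa> (u \<cdot> k))"
proof -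
  have "\<kappa> (s \<cdot> bracket_join br B) = bracket_join br ((\<lambda>k. \<kappa> (s \<cdot> k)) ` B)"
    if "B \<subseteq> bracket_set br" for s B
  proof -
    have "\<kappa> (s \<cdot> bracket_join br B) = \<kappa> (Sup ((\<lambda>k. s \<cdot> k) ` B))"
      using that by (simp add: bracket_join_eq proj_closure_mult_proj_closure mult_Sup_right)
    also have "\<dots> = bracket_join br (\<kappa> ` (\<lambda>k. s \<cdot> k) ` B)"
      by (simp only: bracket_join_image_proj_closure)
    finally show ?thesis
      by (simp add: image_image)
  qed
  moreover have "\<kappa> (Sup T \<cdot> k) = bracket_join br ((\<lambda>t. \<kappa> (t \<cdot> k)) ` T)" for T k
    using bracket_join_image_proj_closure[of "(\<lambda>t. t \<cdot> k) ` T"]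
    by (simp add: mult_Sup_left image_image)
  ultimately show ?thesis
    unfolding left_module_def
    by (simp add: complete_lattice_on_bracket_set bracket_setI proj_closure_mult_proj_closure
        mult_assoc mult_unit_left proj_closure_bracket_set)
qed

end

theorem mainTheorem7:
  fixes mult :: "'a::complete_lattice \<Rightarrow> 'a \<Rightarrow> 'a"
    and e :: 'a and star :: "'a \<Rightarrow> 'a" and br :: "'a \<Rightarrow> 'a"
  assumes "foulis_quantale mult e star br"
  shows "left_module mult e (bracket_set br) (bracket_le mult) (bracket_join br)
           (\<lambda>u k. perp star br (perp star br (mult u k)))
       \<and> right_module (\<and>) True (bracket_set br) (bracket_le mult) (bracket_join br)
           (two_action (bracket_join br))"
proof -
  interpret foulis mult e star br
    by unfold_locales (rule assms)
  show ?thesis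
    using left_module_bracket_set right_module_two_action[OF complete_lattice_on_bracket_set]
    by (simp add: perp_perp_eq_proj_closure)
qed

end
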